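(* Let $X$ be a locally compact Hausdorff space and let $p,q\in\mathrm{RP}_{p.w.}(X)$ with $p\le q$ and $p\subseteq\!\subseteq q$. Then for each $i\ge1$, $R_{\ge i}(p)\subseteq\!\subseteq R_{\ge i}(q)$, i.e. the closure of $R_{\ge i}(p)$ is compact and contained in $R_{\ge i}(q)$.
   Context: $\mathcal K$ is the compact operators on $\ell_2(\mathbb N)$. $\mathrm{RP}_{p.w.}(X)$ is the set of maps $X\to B(\ell_2(\mathbb N))$ of the form $x\mapsto\chi_{(0,\infty)}(a(x))$ for $a\in C_0(X,\mathcal K)^+$. For $p\le q$ in $\mathrm{RP}_{p.w.}(X)$, $p\subseteq\!\subseteq q$ means there is $a\in C_0(X,\mathcal K)^+$ with $a(x)p(x)=p(x)$ and $q(x)a(x)=a(x)$ for all $x$. $R_{\ge i}(p):=\{x\in X:\mathrm{Rank}\,p(x)\ge i\}$. For sets, $A\subseteq\!\subseteq B$ means $\overline A$ is compact and $\overline A\subseteq B$. *)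

theory Defs
  imports "HOL-Analysis.Analysis"
begin

text \<open>Operators on l2(N) are represented by
functions on all sequences which vanish off l2 (so that they are uniquely
determined by their action on l2).\<close>

type_synonym seq = "nat \<Rightarrow> complex"
type_synonym l2op = "seq \<Rightarrow> seq"

definition l2 :: "seq set" where
  "l2 = {f. summable (\<lambda>n. (cmod (f n))^2)}"

definition l2_norm :: "seq \<Rightarrow> real" where
  "l2_norm f = sqrt (\<Sum>n. (cmod (f n))^2)"

definition l2_inner :: "seq \<Rightarrow> seq \<Rightarrow> complex" where
  "l2_inner f g = (\<Sum>n. cnj (f n) * g n)"

definition bdd_l2op :: "l2op \<Rightarrow> bool" where
  "bdd_l2op T \<longleftrightarrow>
     (\<forall>f\<in>l2. T f \<in> l2) \<and>
     (\<forall>f\<in>l2. \<forall>g\<in>l2. \<forall>c. T (\<lambda>n. c * f n + g n) = (\<lambda>n. c * T f n + T g n)) \<and>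
     (\<exists>K. \<forall>f\<in>l2. l2_norm (T f) \<le> K * l2_norm f) \<and>
     (\<forall>f. f \<notin> l2 \<longrightarrow> T f = (\<lambda>_. 0))"

definition op_norm :: "l2op \<Rightarrow> real" where
  "op_norm T = Sup {l2_norm (T f) | f. f \<in> l2 \<and> l2_norm f \<le> 1}"

definition op_diff :: "l2op \<Rightarrow> l2op \<Rightarrow> l2op" where
  "op_diff S T = (\<lambda>f n. S f n - T f n)"

definition cpt_l2op :: "l2op \<Rightarrow> bool" where
  "cpt_l2op T \<longleftrightarrow> bdd_l2op T \<and>
     (\<forall>s :: nat \<Rightarrow> seq. (\<forall>n. s n \<in> l2 \<and> l2_norm (s n) \<le> 1) \<longrightarrow>
        (\<exists>(r :: nat \<Rightarrow> nat) g. strict_mono r \<and> g \<in> l2 \<and>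
               (\<lambda>n. l2_norm (\<lambda>k. T (s (r n)) k - g k)) \<longlonglongrightarrow> 0))"

definition pos_l2op :: "l2op \<Rightarrow> bool" where
  "pos_l2op T \<longleftrightarrow> bdd_l2op T \<and>
     (\<forall>f\<in>l2. Im (l2_inner f (T f)) = 0 \<and> 0 \<le> Re (l2_inner f (T f)))"

definition op_le :: "l2op \<Rightarrow> l2op \<Rightarrow> bool" where
  "op_le S T \<longleftrightarrow> pos_l2op (op_diff T S)"

text \<open>C_0(X, K)^+ : norm-continuous maps into positive compact operators
vanishing at infinity.\<close>
definition C0K_pos :: "('a::topological_space \<Rightarrow> l2op) set" where
  "C0K_pos = {a. (\<forall>x. cpt_l2op (a x) \<and> pos_l2op (a x)) \<and>
      (\<forall>x. \<forall>e>0. eventually (\<lambda>y. op_norm (op_diff (a y) (a x)) < e) (at x)) \<and>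
      (\<forall>e>0. compact {x. e \<le> op_norm (a x)})}"

definition l2_closure :: "seq set \<Rightarrow> seq set" where
  "l2_closure S = {g\<in>l2. \<forall>e>0. \<exists>h\<in>S. l2_norm (\<lambda>k. g k - h k) < e}"

text \<open>For a positive operator T, chi_(0,inf)(T) is the orthogonal projection
onto the closure of the range of T (the support/range projection).\<close>
definition range_proj :: "l2op \<Rightarrow> l2op" where
  "range_proj T = (THE P. bdd_l2op P \<and> (\<forall>f\<in>l2. P (P f) = P f) \<and>
      (\<forall>f\<in>l2. \<forall>g\<in>l2. l2_inner (P f) g = l2_inner f (P g)) \<and>
      P ` l2 = l2_closure (T ` l2))"

definition RP_pw :: "('a::topological_space \<Rightarrow> l2op) set" where
  "RP_pw = {p. \<exists>a\<in>C0K_pos. \<forall>x. p x = range_proj (a x)}"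

definition rp_cc :: "('a::topological_space \<Rightarrow> l2op) \<Rightarrow> ('a \<Rightarrow> l2op) \<Rightarrow> bool" where
  "rp_cc p q \<longleftrightarrow> (\<exists>a\<in>C0K_pos. \<forall>x. (\<forall>f\<in>l2. a x (p x f) = p x f \<and> q x (a x f) = a x f))"

definition rank_ge :: "l2op \<Rightarrow> nat \<Rightarrow> bool" where
  "rank_ge T i \<longleftrightarrow> (\<exists>v :: nat \<Rightarrow> seq. (\<forall>j<i. v j \<in> T ` l2) \<and>
      (\<forall>c :: nat \<Rightarrow> complex. (\<forall>k. (\<Sum>j<i. c j * v j k) = 0) \<longrightarrow> (\<forall>j<i. c j = 0)))"

definition R_ge :: "nat \<Rightarrow> ('a \<Rightarrow> l2op) \<Rightarrow> 'a set" where
  "R_ge i p = {x. rank_ge (p x) i}"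

definition set_cc :: "'a::topological_space set \<Rightarrow> 'a set \<Rightarrow> bool" where
  "set_cc A B \<longleftrightarrow> compact (closure A) \<and> closure A \<subseteq> B"

end

theory Submission
  imports Defs
begin

text \<open>Let \<open>a\<close> witness \<open>p \<subseteq>\<subseteq> q\<close>: \<open>a(x)\<close> fixes the range of \<open>p(x)\<close>, and \<open>q(x)\<close> fixes the
range of \<open>a(x)\<close>. An operator with a nonzero fixed vector has norm at least 1, so
\<open>R\<^sub>\<ge>\<^sub>i(p)\<close> lies in the compact set \<open>{x. \<parallel>a(x)\<parallel> \<ge> 1}\<close>. For \<open>x\<close> in its closure choose
\<open>y \<in> R\<^sub>\<ge>\<^sub>i(p)\<close> with \<open>\<parallel>a(y) - a(x)\<parallel> < 1\<close>; then \<open>a(y)\<close> fixes \<open>i\<close> independent vectors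
\<open>w\<^sub>j\<close>, and a nontrivial combination \<open>u\<close> of them with \<open>a(x) u = 0\<close> would be a fixed vector
of \<open>a(y) - a(x)\<close>. Hence the \<open>a(x) w\<^sub>j\<close> are independent, and they lie in the range
of \<open>q(x)\<close>.\<close>

lemma l2_zero [simp]: "(\<lambda>n. 0) \<in> l2"
  by (simp add: l2_def)

lemma cmod_lincomb_sq_le: "(cmod (c * a + b))^2 \<le> 2 * (cmod c)^2 * (cmod a)^2 + 2 * (cmod b)^2"
proof -
  have "(cmod (c * a + b))^2 \<le> (cmod c * cmod a + cmod b)^2"
    by (simp add: power_mono norm_mult [symmetric] norm_triangle_ineq)
  also have "\<dots> \<le> 2 * (cmod c * cmod a)^2 + 2 * (cmod b)^2"
    using zero_le_power2 [of "cmod c * cmod a - cmod b"] by (simp add: power2_diff power2_sum)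
  finally show ?thesis
    by (simp add: power_mult_distrib)
qed

lemma l2_lincomb: "f \<in> l2 \<Longrightarrow> g \<in> l2 \<Longrightarrow> (\<lambda>n. c * f n + g n) \<in> l2"
  unfolding l2_def mem_Collect_eq
  by (rule summable_comparison_test [where g = "\<lambda>n. 2 * (cmod c)^2 * (cmod (f n))^2 + 2 * (cmod (g n))^2"])
     (auto intro!: summable_add summable_mult cmod_lincomb_sq_le)

lemma l2_scale: "f \<in> l2 \<Longrightarrow> (\<lambda>n. c * f n) \<in> l2"
  using l2_lincomb [of f "\<lambda>n. 0" c] by simp

lemma l2_norm_nonneg: "f \<in> l2 \<Longrightarrow> 0 \<le> l2_norm f"
  unfolding l2_norm_def l2_def by (simp add: suminf_nonneg)

lemma l2_norm_sq: "f \<in> l2 \<Longrightarrow> (l2_norm f)^2 = (\<Sum>n. (cmod (f n))^2)"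
  unfolding l2_norm_def l2_def by (simp add: suminf_nonneg)

lemma l2_norm_scale: "f \<in> l2 \<Longrightarrow> l2_norm (\<lambda>n. c * f n) = cmod c * l2_norm f"
  unfolding l2_norm_def l2_def
  by (simp add: norm_mult power_mult_distrib suminf_mult real_sqrt_mult)

lemma l2_norm_eq_0_iff: "f \<in> l2 \<Longrightarrow> l2_norm f = 0 \<longleftrightarrow> f = (\<lambda>n. 0)"
  unfolding l2_norm_def l2_def by (auto simp: suminf_eq_zero_iff fun_eq_iff)

lemma l2_norm_diff_le:
  assumes "f \<in> l2" "g \<in> l2"
  shows "(l2_norm (\<lambda>n. f n - g n))^2 \<le> 2 * (l2_norm f)^2 + 2 * (l2_norm g)^2"
proof -
  have sf: "summable (\<lambda>n. (cmod (f n))^2)" and sg: "summable (\<lambda>n. (cmod (g n))^2)"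
    using assms unfolding l2_def by auto
  have "(\<lambda>n. f n - g n) \<in> l2"
    using l2_lincomb [OF assms(2,1), of "-1"] by simp
  then have "(l2_norm (\<lambda>n. f n - g n))^2 = (\<Sum>n. (cmod (f n - g n))^2)"
    by (rule l2_norm_sq)
  also have "\<dots> \<le> (\<Sum>n. 2 * (cmod (f n))^2 + 2 * (cmod (g n))^2)"
    using cmod_lincomb_sq_le [of "-1" "g n" "f n" for n] \<open>(\<lambda>n. f n - g n) \<in> l2\<close> sf sg
    by (intro suminf_le summable_add summable_mult) (auto simp: l2_def norm_minus_commute add.commute)
  also have "\<dots> = 2 * (l2_norm f)^2 + 2 * (l2_norm g)^2"
    using sf sg assms by (simp add: l2_norm_sq suminf_add [symmetric] suminf_mult summable_mult)
  finally show ?thesis .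
qed

lemma bdd_l2op_in_l2: "bdd_l2op T \<Longrightarrow> T f \<in> l2"
  unfolding bdd_l2op_def by (metis l2_zero)

lemma bdd_l2op_lincomb:
  "bdd_l2op T \<Longrightarrow> f \<in> l2 \<Longrightarrow> g \<in> l2 \<Longrightarrow> T (\<lambda>n. c * f n + g n) = (\<lambda>n. c * T f n + T g n)"
  unfolding bdd_l2op_def by blast

lemma bdd_l2op_zero: "bdd_l2op T \<Longrightarrow> T (\<lambda>n. 0) = (\<lambda>n. 0)"
  using bdd_l2op_lincomb [of T "\<lambda>n. 0" "\<lambda>n. 0" 1] by (simp add: fun_eq_iff)

lemma bdd_l2op_scale: "bdd_l2op T \<Longrightarrow> f \<in> l2 \<Longrightarrow> T (\<lambda>n. c * f n) = (\<lambda>n. c * T f n)"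
  using bdd_l2op_lincomb [of T f "\<lambda>n. 0" c] by (simp add: bdd_l2op_zero)

lemma bdd_l2op_sum:
  fixes m :: nat
  assumes "bdd_l2op T" "\<forall>j<m. w j \<in> l2"
  shows "(\<lambda>k. \<Sum>j<m. c j * w j k) \<in> l2 \<and> T (\<lambda>k. \<Sum>j<m. c j * w j k) = (\<lambda>k. \<Sum>j<m. c j * T (w j) k)"
  using assms(2)
proof (induction m)
  case 0
  then show ?case
    using bdd_l2op_zero [OF assms(1)] by simp
next
  case (Suc m)
  then have IH: "(\<lambda>k. \<Sum>j<m. c j * w j k) \<in> l2"
      "T (\<lambda>k. \<Sum>j<m. c j * w j k) = (\<lambda>k. \<Sum>j<m. c j * T (w j) k)"
    and "w m \<in> l2"
    by auto
  then show ?case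
    using l2_lincomb [OF \<open>w m \<in> l2\<close> IH(1), of "c m"] bdd_l2op_lincomb [OF assms(1) \<open>w m \<in> l2\<close> IH(1), of "c m"]
    by (simp add: add.commute)
qed

lemma bdd_l2op_op_diff:
  assumes S: "bdd_l2op S" and T: "bdd_l2op T"
  shows "bdd_l2op (op_diff S T)"
proof -
  obtain KS KT where KS: "\<forall>f\<in>l2. l2_norm (S f) \<le> KS * l2_norm f"
    and KT: "\<forall>f\<in>l2. l2_norm (T f) \<le> KT * l2_norm f"
    using S T unfolding bdd_l2op_def by blast
  have "l2_norm (op_diff S T f) \<le> sqrt (2 * KS^2 + 2 * KT^2) * l2_norm f" if "f \<in> l2" for f
  proof -
    have "(l2_norm (S f))^2 \<le> (KS * l2_norm f)^2" "(l2_norm (T f))^2 \<le> (KT * l2_norm f)^2"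
      using KS KT that l2_norm_nonneg [OF bdd_l2op_in_l2 [OF S]] l2_norm_nonneg [OF bdd_l2op_in_l2 [OF T]]
      by (auto intro: power_mono)
    then have "(l2_norm (op_diff S T f))^2 \<le> (2 * KS^2 + 2 * KT^2) * (l2_norm f)^2"
      using l2_norm_diff_le [OF bdd_l2op_in_l2 [OF S] bdd_l2op_in_l2 [OF T], of f f]
      unfolding op_diff_def by (simp add: power_mult_distrib algebra_simps)
    then show ?thesis
      using l2_norm_nonneg [OF that]
      by (metis real_le_rsqrt real_sqrt_mult real_sqrt_pow2_iff real_sqrt_unique zero_le_power2)
  qed
  moreover have "op_diff S T (\<lambda>n. c * f n + g n) = (\<lambda>n. c * op_diff S T f n + op_diff S T g n)"
    if "f \<in> l2" "g \<in> l2" for c f g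
    using bdd_l2op_lincomb [OF S that] bdd_l2op_lincomb [OF T that]
    by (simp add: op_diff_def algebra_simps)
  moreover have "op_diff S T f \<in> l2" for f
    using l2_lincomb [OF bdd_l2op_in_l2 [OF T] bdd_l2op_in_l2 [OF S], of "-1" f f]
    by (simp add: op_diff_def)
  ultimately show ?thesis
    using S T unfolding bdd_l2op_def by (auto simp: op_diff_def)
qed

lemma op_norm_upper:
  assumes "bdd_l2op T" "g \<in> l2" "l2_norm g \<le> 1"
  shows "l2_norm (T g) \<le> op_norm T"
proof -
  obtain K where K: "\<forall>f\<in>l2. l2_norm (T f) \<le> K * l2_norm f"
    using assms(1) unfolding bdd_l2op_def by blast
  have "l2_norm (T f) \<le> max K 0" if "f \<in> l2" "l2_norm f \<le> 1" for f
  proof -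
    have "l2_norm (T f) \<le> max K 0 * l2_norm f"
      using K that l2_norm_nonneg [of f] by (metis max.cobounded1 mult_right_mono order_trans)
    also have "\<dots> \<le> max K 0"
      using that l2_norm_nonneg [of f] by (simp add: mult_left_le)
    finally show ?thesis .
  qed
  then have "bdd_above {l2_norm (T f) | f. f \<in> l2 \<and> l2_norm f \<le> 1}"
    by (auto intro!: bdd_aboveI)
  then show ?thesis
    unfolding op_norm_def using assms(2,3) by (auto intro!: cSup_upper)
qed

lemma op_norm_ge_1_if_fixed_point:
  assumes T: "bdd_l2op T" and f: "f \<in> l2" "f \<noteq> (\<lambda>n. 0)" "T f = f"
  shows "1 \<le> op_norm T"
proof -
  have "l2_norm f > 0"
    using f l2_norm_nonneg l2_norm_eq_0_iff by (metis less_eq_real_def)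
  define c where "c = complex_of_real (1 / l2_norm f)"
  define g where "g = (\<lambda>n. c * f n)"
  have "g \<in> l2"
    unfolding g_def using f(1) by (rule l2_scale)
  moreover have "l2_norm g = cmod c * l2_norm f"
    unfolding g_def using f(1) by (rule l2_norm_scale)
  then have "l2_norm g = 1"
    using \<open>l2_norm f > 0\<close> by (simp add: c_def norm_divide)
  moreover have "T g = g"
    unfolding g_def using bdd_l2op_scale [OF T f(1)] f(3) by simp
  ultimately show ?thesis
    using op_norm_upper [OF T, of g] by simp
qed

lemma op_norm_op_diff_self: "op_norm (op_diff T T) = 0"
proof -
  have "{l2_norm (op_diff T T f) | f. f \<in> l2 \<and> l2_norm f \<le> 1} = {0}"
    using l2_norm_eq_0_iff [of "\<lambda>n. 0"] by (auto simp: op_diff_def intro!: exI [of _ "\<lambda>n. 0"])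
  then show ?thesis
    unfolding op_norm_def by simp
qed

definition lin_indep :: "(nat \<Rightarrow> seq) \<Rightarrow> nat \<Rightarrow> bool" where
  "lin_indep v i \<longleftrightarrow> (\<forall>c. (\<forall>k. (\<Sum>j<i. c j * v j k) = 0) \<longrightarrow> (\<forall>j<i. c j = 0))"

lemma rank_ge_iff_lin_indep: "rank_ge T i \<longleftrightarrow> (\<exists>v. (\<forall>j<i. v j \<in> T ` l2) \<and> lin_indep v i)"
  unfolding rank_ge_def lin_indep_def ..

lemma lin_indep_nonzero:
  assumes "lin_indep v i" "j < i"
  shows "v j \<noteq> (\<lambda>k. 0)"
proof
  assume "v j = (\<lambda>k. 0)"
  then have "\<forall>k. (\<Sum>l<i. (if l = j then 1 else 0) * v l k) = 0"
    by (intro allI sum.neutral) auto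
  then show False
    using assms(1) [unfolded lin_indep_def, rule_format, of "\<lambda>l. if l = j then 1 else 0" j] assms(2)
    by simp
qed

lemma rank_ge_mono: "T ` l2 \<subseteq> S ` l2 \<Longrightarrow> rank_ge T i \<Longrightarrow> rank_ge S i"
  unfolding rank_ge_iff_lin_indep by (meson subsetD)

lemma rank_ge_if_range_fixed:
  assumes A: "bdd_l2op A" and fixed: "\<forall>f\<in>l2. Q (A f) = A f" and "rank_ge A i"
  shows "rank_ge Q i"
proof -
  have "A ` l2 \<subseteq> Q ` l2"
  proof
    fix g assume "g \<in> A ` l2"
    then obtain f where "f \<in> l2" "g = A f"
      by blast
    then show "g \<in> Q ` l2"
      using fixed bdd_l2op_in_l2 [OF A, of f] by (simp add: image_eqI [of _ Q g])
  qed
  then show ?thesis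
    using rank_ge_mono \<open>rank_ge A i\<close> by blast
qed

lemma op_norm_ge_1_if_fixes_range:
  assumes A: "bdd_l2op A" and fixed: "\<forall>f\<in>l2. A (P f) = P f"
    and "rank_ge P i" "0 < i"
  shows "1 \<le> op_norm A"
proof -
  obtain v where v: "\<forall>j<i. v j \<in> P ` l2" and "lin_indep v i"
    using \<open>rank_ge P i\<close> unfolding rank_ge_iff_lin_indep by blast
  have "v 0 \<noteq> (\<lambda>k. 0)"
    using lin_indep_nonzero [OF \<open>lin_indep v i\<close> \<open>0 < i\<close>] .
  moreover obtain f where "f \<in> l2" "v 0 = P f"
    using v \<open>0 < i\<close> by blast
  then have "A (v 0) = v 0"
    using fixed by simp
  moreover have "v 0 \<in> l2"
    using bdd_l2op_in_l2 [OF A, of "v 0"] \<open>A (v 0) = v 0\<close> by simp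
  ultimately show ?thesis
    using op_norm_ge_1_if_fixed_point [OF A] by simp
qed

lemma lin_indep_image_if_op_norm_diff_lt_1:
  assumes A: "bdd_l2op A" and B: "bdd_l2op B"
    and w: "\<forall>j<i. w j \<in> l2 \<and> A (w j) = w j" "lin_indep w i"
    and "op_norm (op_diff A B) < 1"
  shows "lin_indep (\<lambda>j. B (w j)) i"
  unfolding lin_indep_def
proof (rule allI, rule impI)
  fix c assume c: "\<forall>k. (\<Sum>j<i. c j * B (w j) k) = 0"
  define u where "u = (\<lambda>k. \<Sum>j<i. c j * w j k)"
  have u: "u \<in> l2" "B u = (\<lambda>k. 0)" "A u = u"
    using bdd_l2op_sum [OF A, of i w c] bdd_l2op_sum [OF B, of i w c] w(1) c
    by (auto simp: u_def)
  then have "op_diff A B u = u"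
    by (simp add: op_diff_def)
  then have "u = (\<lambda>k. 0)"
    using op_norm_ge_1_if_fixed_point [OF bdd_l2op_op_diff [OF A B] \<open>u \<in> l2\<close>]
      \<open>op_norm (op_diff A B) < 1\<close> by linarith
  then show "\<forall>j<i. c j = 0"
    using w(2) unfolding lin_indep_def u_def fun_eq_iff by blast
qed

lemma rank_ge_if_op_norm_diff_lt_1:
  assumes A: "bdd_l2op A" and B: "bdd_l2op B"
    and fixed: "\<forall>f\<in>l2. A (P f) = P f" and "rank_ge P i"
    and "op_norm (op_diff A B) < 1"
  shows "rank_ge B i"
proof -
  obtain w where w: "\<forall>j<i. w j \<in> P ` l2" "lin_indep w i"
    using \<open>rank_ge P i\<close> unfolding rank_ge_iff_lin_indep by blast
  have "\<forall>j<i. w j \<in> l2 \<and> A (w j) = w j"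
  proof (intro allI impI)
    fix j assume "j < i"
    then obtain f where "f \<in> l2" "w j = P f"
      using w(1) by blast
    then have "A (w j) = w j"
      using fixed by simp
    then show "w j \<in> l2 \<and> A (w j) = w j"
      using bdd_l2op_in_l2 [OF A, of "w j"] by simp
  qed
  then have "lin_indep (\<lambda>j. B (w j)) i"
    using lin_indep_image_if_op_norm_diff_lt_1 [OF A B _ w(2) \<open>op_norm (op_diff A B) < 1\<close>] by simp
  moreover have "\<forall>j<i. B (w j) \<in> B ` l2"
    using \<open>\<forall>j<i. w j \<in> l2 \<and> A (w j) = w j\<close> by simp
  ultimately show ?thesis
    unfolding rank_ge_iff_lin_indep by (intro exI [of _ "\<lambda>j. B (w j)"]) simp
qed

lemma compact_closure_if_subset_compact:
  fixes K :: "'a::t2_space set"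
  assumes "compact K" "A \<subseteq> K"
  shows "compact (closure A) \<and> closure A \<subseteq> K"
proof -
  have "closure A \<subseteq> K"
    using assms by (simp add: closure_minimal compact_imp_closed)
  then show ?thesis
    using compact_Int_closed [OF \<open>compact K\<close> closed_closure [of A]] by (simp add: Int_absorb1)
qed

lemma closure_eventually_nhds_witness:
  assumes "x \<in> closure S" "eventually P (nhds x)"
  shows "\<exists>y\<in>S. P y"
proof -
  obtain U where "open U" "x \<in> U" "\<forall>y\<in>U. P y"
    using assms(2) unfolding eventually_nhds by blast
  then show ?thesis
    using assms(1) open_Int_closure_eq_empty [of U S] by blast
qed

theorem lemma5p2:
  fixes p q :: "'a::t2_space \<Rightarrow> l2op"
  assumes "locally_compact_space (euclidean :: 'a topology)"
    and "p \<in> RP_pw" and "q \<in> RP_pw"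
    and "\<forall>x. op_le (p x) (q x)"
    and "rp_cc p q"
    and "i \<ge> 1"
  shows "set_cc (R_ge i p) (R_ge i q)"
proof -
  obtain a where a: "a \<in> C0K_pos"
    and fixed: "\<forall>x. \<forall>f\<in>l2. a x (p x f) = p x f \<and> q x (a x f) = a x f"
    using \<open>rp_cc p q\<close> unfolding rp_cc_def by blast
  have bdd: "bdd_l2op (a x)" for x
    using a unfolding C0K_pos_def cpt_l2op_def by blast
  have near: "eventually (\<lambda>y. op_norm (op_diff (a y) (a x)) < 1) (nhds x)" for x
    using a unfolding C0K_pos_def eventually_nhds_conv_at by (simp add: op_norm_op_diff_self)
  have "R_ge i p \<subseteq> {x. 1 \<le> op_norm (a x)}"
  proof
    fix x assume "x \<in> R_ge i p"
    then show "x \<in> {x. 1 \<le> op_norm (a x)}"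
      using op_norm_ge_1_if_fixes_range [OF bdd, of x "p x" i] fixed \<open>i \<ge> 1\<close> by (simp add: R_ge_def)
  qed
  moreover have "compact {x. 1 \<le> op_norm (a x)}"
    using a unfolding C0K_pos_def by simp
  ultimately have "compact (closure (R_ge i p))"
    using compact_closure_if_subset_compact by blast
  moreover have "closure (R_ge i p) \<subseteq> R_ge i q"
  proof
    fix x assume "x \<in> closure (R_ge i p)"
    then obtain y where "y \<in> R_ge i p" "op_norm (op_diff (a y) (a x)) < 1"
      using closure_eventually_nhds_witness [OF _ near] by blast
    then have "rank_ge (a x) i"
      using rank_ge_if_op_norm_diff_lt_1 [OF bdd bdd, of y "p y" i x] fixed by (simp add: R_ge_def)
    then show "x \<in> R_ge i q"
      using rank_ge_if_range_fixed [OF bdd [of x], where Q = "q x"] fixed by (simp add: R_ge_def)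
  qed
  ultimately show ?thesis
    unfolding set_cc_def ..
qed

end
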